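(* Fix $\mathcal K>0$. The closure of $\mathrm{Conv}(\mathcal M^{(\mathcal K)}_{\mathrm{PR}})$ in the topology of componentwise weak convergence equals $\mathcal M^{(\mathcal K)}_{\mathrm{NS}}$; in particular, for every $\boldsymbol\mu\in\mathcal M^{(\mathcal K)}_{\mathrm{NS}}$ there is a sequence in $\mathrm{Conv}(\mathcal M^{(\mathcal K)}_{\mathrm{PR}})$ converging weakly, componentwise, to $\boldsymbol\mu$.
   Context: A behaviour on $[-\mathcal K,\mathcal K]^2$ is a family $\boldsymbol\mu=(\mu_{x,y})_{x,y\in\{0,1\}}$ of Borel probability measures on $[-\mathcal K,\mathcal K]^2$; convex combinations are componentwise. It is no-signaling if $\mu_{x,0}(A\times[-\mathcal K,\mathcal K])=\mu_{x,1}(A\times[-\mathcal K,\mathcal K])$ for all $x$ and Borel $A\subseteq[-\mathcal K,\mathcal K]$, and $\mu_{0,y}([-\mathcal K,\mathcal K]\times B)=\mu_{1,y}([-\mathcal K,\mathcal K]\times B)$ for all $y$ and Borel $B$; $\mathcal M^{(\mathcal K)}_{\mathrm{NS}}$ is the set of these. $\delta_{a,b}$ is the Dirac measure at $(a,b)$. A CV PR box of order $k\in\mathbb N$ is a behaviour with $\mu_{x,y}=\frac1k\sum_{j=1}^k\delta_{a_{x,j},\,b_{y,[j+xy]_k}}$, where for each $x,y$ the vectors $\boldsymbol a_x,\boldsymbol b_y$ each have pairwise distinct components and $[\,\cdot\,]_k$ is reduction modulo $k$ into $\{1,\dots,k\}$; $\mathcal M^{(\mathcal K)}_{\mathrm{PR}}$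 is the set of CV PR boxes (all orders $k$) with all components of $\boldsymbol a_x,\boldsymbol b_y$ in $[-\mathcal K,\mathcal K]$. $\mathrm{Conv}$ denotes the set of finite convex combinations. Weak convergence $\mu_n\to\mu$ means $\int f\,d\mu_n\to\int f\,d\mu$ for all bounded continuous $f$ on $[-\mathcal K,\mathcal K]^2$. *)

theory Defs
  imports "HOL-Probability.Probability"
begin

definition sq :: "real \<Rightarrow> (real \<times> real) set" where
  "sq K = {-K..K} \<times> {-K..K}"

definition sqM :: "real \<Rightarrow> (real \<times> real) measure" where
  "sqM K = restrict_space borel (sq K)"

text \<open>A behaviour: inputs x,y in {0,1} encoded as bool (False = 0, True = 1);
  each component is a Borel probability measure on [-K,K]^2.\<close>
type_synonym behaviour = "bool \<Rightarrow> bool \<Rightarrow> (real \<times> real) measure"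

definition is_behaviour :: "real \<Rightarrow> behaviour \<Rightarrow> bool" where
  "is_behaviour K \<mu> \<longleftrightarrow>
     (\<forall>x y. prob_space (\<mu> x y) \<and> sets (\<mu> x y) = sets (sqM K))"

definition no_signaling :: "real \<Rightarrow> behaviour \<Rightarrow> bool" where
  "no_signaling K \<mu> \<longleftrightarrow> is_behaviour K \<mu> \<and>
     (\<forall>x A. A \<in> sets (borel :: real measure) \<and> A \<subseteq> {-K..K} \<longrightarrow>
        measure (\<mu> x False) (A \<times> {-K..K}) = measure (\<mu> x True) (A \<times> {-K..K})) \<and>
     (\<forall>y B. B \<in> sets (borel :: real measure) \<and> B \<subseteq> {-K..K} \<longrightarrow>
        measure (\<mu> False y) ({-K..K} \<times> B) = measure (\<mu> True y) ({-K..K} \<times> B))"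

definition redk :: "nat \<Rightarrow> nat \<Rightarrow> nat" where
  "redk k m = (m - 1) mod k + 1"

text \<open>CV PR box: mu_{x,y} = (1/k) sum_{j=1..k} delta_{(a_{x,j}, b_{y,[j+xy]_k})},
  expressed through the values of the measure on every measurable set.\<close>
definition is_PR_box :: "real \<Rightarrow> behaviour \<Rightarrow> bool" where
  "is_PR_box K \<mu> \<longleftrightarrow> is_behaviour K \<mu> \<and>
     (\<exists>(k::nat) (a :: bool \<Rightarrow> nat \<Rightarrow> real) (b :: bool \<Rightarrow> nat \<Rightarrow> real).
        k \<ge> 1 \<and>
        (\<forall>x. inj_on (a x) {1..k}) \<and> (\<forall>y. inj_on (b y) {1..k}) \<and>
        (\<forall>x j. j \<in> {1..k} \<longrightarrow> a x j \<in> {-K..K}) \<and>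
        (\<forall>y j. j \<in> {1..k} \<longrightarrow> b y j \<in> {-K..K}) \<and>
        (\<forall>x y. \<forall>A \<in> sets (\<mu> x y).
           emeasure (\<mu> x y) A =
             ennreal (real (card {j \<in> {1..k}.
                 (a x j, b y (redk k (j + of_bool (x \<and> y)))) \<in> A}) / real k)))"

definition in_conv_PR :: "real \<Rightarrow> behaviour \<Rightarrow> bool" where
  "in_conv_PR K \<mu> \<longleftrightarrow> is_behaviour K \<mu> \<and>
     (\<exists>(n::nat) (c :: nat \<Rightarrow> real) (\<nu> :: nat \<Rightarrow> behaviour).
        (\<forall>i<n. c i \<ge> 0 \<and> is_PR_box K (\<nu> i)) \<and> (\<Sum>i<n. c i) = 1 \<and>
        (\<forall>x y. \<forall>A \<in> sets (\<mu> x y).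
           emeasure (\<mu> x y) A = (\<Sum>i<n. ennreal (c i) * emeasure (\<nu> i x y) A)))"

definition cw_weak_conv :: "real \<Rightarrow> (nat \<Rightarrow> behaviour) \<Rightarrow> behaviour \<Rightarrow> bool" where
  "cw_weak_conv K \<mu>s \<mu> \<longleftrightarrow>
     (\<forall>x y. \<forall>f :: real \<times> real \<Rightarrow> real.
        continuous_on (sq K) f \<and> bounded (f ` sq K) \<longrightarrow>
        (\<lambda>n. \<integral>t. f t \<partial>(\<mu>s n x y)) \<longlonglongrightarrow> (\<integral>t. f t \<partial>(\<mu> x y)))"

end

theory Submission
  imports Defs
begin

text \<open>
  Closedness: in a CV PR box Alice's marginal does not depend on Bob's input, and Bob's
  marginal does not depend on Alice's input because the cyclic shift \<open>j \<mapsto> [j + 1]\<^sub>k\<close> only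
  permutes his outcomes; hence finite mixtures are no-signaling. Marginals of weak limits are
  weak limits of the marginals, and a distribution on the line is determined by the integrals
  of the continuous step functions \<open>cts_step a b\<close>, so the limit is no-signaling as well.

  Density: cut the square into an \<open>m \<times> m\<close> grid. The cell probabilities of a no-signaling
  behaviour form a discrete no-signaling table. Following positive entries through the input
  pairs (1,1), (0,1), (0,0), (1,0) and back to (1,1) eventually closes a cycle, whose entries
  form the support of a discrete PR table; subtracting the largest multiple of it that keeps
  the table nonnegative removes an entry of the support, so by induction every discrete
  no-signaling table is a nonnegative combination of discrete PR tables. Placing the outcomes
  of each discrete PR table at distinct points of the prescribed cells gives a mixture of CV PR
  boxes with the same cell probabilities, and uniform continuity of a test function on the
  square yields weak convergence as the mesh tends to zero.
\<close>

definition discrete_measure :: "real \<Rightarrow> 'i set \<Rightarrow> ('i \<Rightarrow> real) \<Rightarrow> ('i \<Rightarrow> real \<times> real) \<Rightarrow> (real \<times> real) measure" where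
  "discrete_measure K P w g = distr (density (count_space P) (\<lambda>i. ennreal (w i))) (sqM K) g"

lemma space_sqM [simp]: "space (sqM K) = sq K"
  by (simp add: sqM_def space_restrict_space)

lemma sets_discrete_measure [simp]: "sets (discrete_measure K P w g) = sets (sqM K)"
  by (simp add: discrete_measure_def)

lemma emeasure_discrete_measure:
  assumes "finite P" "\<And>i. i \<in> P \<Longrightarrow> w i \<ge> 0" "g ` P \<subseteq> sq K" "A \<in> sets (sqM K)"
  shows "emeasure (discrete_measure K P w g) A = ennreal (\<Sum>i\<in>{i\<in>P. g i \<in> A}. w i)"
proof -
  have "g \<in> measurable (count_space P) (sqM K)"
    using assms(3) by (auto simp: measurable_count_space_eq1)
  then have "emeasure (discrete_measure K P w g) A
      = (\<integral>\<^sup>+ i. ennreal (w i) * indicator (g -` A \<inter> P) i \<partial>count_space P)"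
    unfolding discrete_measure_def using assms(4) by (simp add: emeasure_distr emeasure_density)
  also have "\<dots> = (\<Sum>i\<in>{i\<in>P. g i \<in> A}. ennreal (w i))"
    using assms(1) by (auto simp: nn_integral_count_space_finite sum.inter_filter[symmetric]
        indicator_def intro!: sum.cong)
  also have "\<dots> = ennreal (\<Sum>i\<in>{i\<in>P. g i \<in> A}. w i)"
    using assms(2) by (subst sum_ennreal) auto
  finally show ?thesis .
qed

lemma prob_space_discrete_measure:
  assumes "finite P" "\<And>i. i \<in> P \<Longrightarrow> w i \<ge> 0" "g ` P \<subseteq> sq K" "(\<Sum>i\<in>P. w i) = 1"
  shows "prob_space (discrete_measure K P w g)"
proof
  have "{i\<in>P. g i \<in> sq K} = P" using assms(3) by auto
  then show "emeasure (discrete_measure K P w g) (space (discrete_measure K P w g)) = 1"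
    using emeasure_discrete_measure[OF assms(1-3) sets.top[of "sqM K"]] assms(4)
    by (simp add: discrete_measure_def)
qed

section \<open>A grid on the square\<close>

definition cell_index :: "real \<Rightarrow> nat \<Rightarrow> real \<Rightarrow> nat" where
  "cell_index K m t = min (m - 1) (nat \<lfloor>(t + K) / (2*K/m)\<rfloor>)"

definition grid_point :: "real \<Rightarrow> nat \<Rightarrow> nat \<Rightarrow> real \<Rightarrow> real" where
  "grid_point K m i s = -K + (2*K/m) * (real i + s)"

definition cell :: "real \<Rightarrow> nat \<Rightarrow> nat \<Rightarrow> nat \<Rightarrow> (real \<times> real) set" where
  "cell K m i j = {z \<in> sq K. cell_index K m (fst z) = i \<and> cell_index K m (snd z) = j}"

definition strip :: "real \<Rightarrow> nat \<Rightarrow> nat \<Rightarrow> real set" where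
  "strip K m i = {t \<in> {-K..K}. cell_index K m t = i}"

lemma cell_index_less: "m \<ge> 1 \<Longrightarrow> cell_index K m t < m"
  by (simp add: cell_index_def)

lemma cell_index_grid_point:
  assumes "K > 0" "i < m" "0 \<le> s" "s < 1"
  shows "cell_index K m (grid_point K m i s) = i"
proof -
  have "(grid_point K m i s + K) / (2*K/m) = real i + s"
    using assms by (simp add: grid_point_def)
  then have "\<lfloor>(grid_point K m i s + K) / (2*K/m)\<rfloor> = int i"
    using assms by (simp add: floor_eq_iff)
  then show ?thesis using assms by (simp add: cell_index_def)
qed

lemma grid_point_in_interval:
  assumes "K > 0" "i < m" "0 \<le> s" "s \<le> 1"
  shows "grid_point K m i s \<in> {-K..K}"
proof -
  have "real i + s \<le> real m" using assms by linarith
  then have "(2*K/m) * (real i + s) \<le> (2*K/m) * m"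
    using assms by (intro mult_left_mono) auto
  then show ?thesis using assms by (auto simp: grid_point_def)
qed

lemma grid_point_inj:
  assumes "K > 0" "m \<ge> 1" "grid_point K m i s = grid_point K m i s'"
  shows "s = s'"
  using assms by (simp add: grid_point_def)

lemma dist_grid_point_cell_index:
  assumes "K > 0" "m \<ge> 1" "t \<in> {-K..K}"
  shows "dist t (grid_point K m (cell_index K m t) 0) \<le> 2*K/m"
proof -
  define u where "u = (t + K) / (2*K/m)"
  define c where "c = real (cell_index K m t)"
  have u: "0 \<le> u" "u \<le> m" "t + K = (2*K/m) * u"
    using assms unfolding u_def by (auto intro!: divide_nonneg_nonneg) (simp_all add: field_simps)
  have "c \<le> u" "u \<le> c + 1"
    using u(1,2) assms(2) unfolding c_def cell_index_def u_def[symmetric] min_def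
    by (auto simp: of_nat_diff) linarith+
  have "t - grid_point K m (cell_index K m t) 0 = (2*K/m) * (u - c)"
    unfolding grid_point_def c_def[symmetric] using u(3) by (simp add: right_diff_distrib)
  then have "dist t (grid_point K m (cell_index K m t) 0) = \<bar>(2*K/m) * (u - c)\<bar>"
    by (simp only: dist_real_def)
  also have "\<dots> = (2*K/m) * \<bar>u - c\<bar>"
    using assms by (simp add: abs_mult)
  also have "\<dots> \<le> 2*K/m"
    using assms \<open>c \<le> u\<close> \<open>u \<le> c + 1\<close> by (intro mult_left_le) auto
  finally show ?thesis .
qed

lemma cell_index_measurable [measurable]: "cell_index K m \<in> measurable borel (count_space UNIV)"
  unfolding cell_index_def by measurable

lemma sq_sets [measurable]: "sq K \<in> sets borel"
  unfolding sq_def by (simp add: borel_closed closed_Times)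

lemma fst_measurable_sqM: "fst \<in> borel_measurable (sqM K)"
  unfolding sqM_def by (rule measurable_restrict_space1) (simp add: borel_prod[symmetric])

lemma snd_measurable_sqM: "snd \<in> borel_measurable (sqM K)"
  unfolding sqM_def by (rule measurable_restrict_space1) (simp add: borel_prod[symmetric])

lemma sets_sqM_iff: "A \<in> sets (sqM K) \<longleftrightarrow> A \<subseteq> sq K \<and> A \<in> sets borel"
  unfolding sqM_def by (simp add: sets_restrict_space_iff)

lemma cell_sets: "cell K m i j \<in> sets (sqM K)"
proof -
  have "fst \<in> borel_measurable (borel :: (real \<times> real) measure)"
       "snd \<in> borel_measurable (borel :: (real \<times> real) measure)"
    by (simp_all add: borel_prod[symmetric])
  then have "{z. cell_index K m (fst z) = i \<and> cell_index K m (snd z) = j} \<in> sets (borel :: (real \<times> real) measure)"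
    by measurable
  then show ?thesis
    unfolding sets_sqM_iff cell_def by (auto simp: Collect_conj_eq)
qed

lemma strip_sets: "strip K m i \<in> sets borel"
  unfolding strip_def by measurable

lemma strip_subset: "strip K m i \<subseteq> {-K..K}"
  by (auto simp: strip_def)

lemma rectangle_sets:
  assumes "A \<in> sets borel" "B \<in> sets borel" "A \<subseteq> {-K..K}" "B \<subseteq> {-K..K}"
  shows "A \<times> B \<in> sets (sqM K)"
  using assms unfolding sets_sqM_iff by (auto simp: sq_def borel_prod[symmetric])

section \<open>Discrete PR tables\<close>

lemma redk_in: "k \<ge> 1 \<Longrightarrow> redk k n \<in> {1..k}"
  by (simp add: redk_def Suc_leI)

lemma redk_id: "t \<in> {1..k} \<Longrightarrow> redk k t = t"
  by (auto simp: redk_def)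

lemma bij_betw_redk_shift:
  assumes "k \<ge> 1"
  shows "bij_betw (\<lambda>t. redk k (t + d)) {1..k} {1..k}"
proof -
  have "inj_on (\<lambda>t. redk k (t + d)) {1..k}"
  proof (rule inj_onI)
    fix t t' assume t: "t \<in> {1..k}" "t' \<in> {1..k}" and eq: "redk k (t + d) = redk k (t' + d)"
    then have "(t - 1 + d) mod k = (t' - 1 + d) mod k"
      by (simp add: redk_def)
    then have "(t - 1) mod k = (t' - 1) mod k" using nat_mod_eq_iff by auto
    moreover have "t - 1 < k" "t' - 1 < k" using t by auto
    ultimately show "t = t'" using t by simp linarith
  qed
  moreover have "(\<lambda>t. redk k (t + d)) ` {1..k} \<subseteq> {1..k}" using redk_in[OF assms] by auto
  ultimately show ?thesis
    unfolding bij_betw_def using endo_inj_surj[of "{1..k}"] by blast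
qed

lemma sum_redk_shift:
  "k \<ge> 1 \<Longrightarrow> (\<Sum>t\<in>{1..k}. h (redk k (t + d))) = (\<Sum>t\<in>{1..k}. h t)"
  by (rule sum.reindex_bij_betw[OF bij_betw_redk_shift])

lemma card_redk_shift:
  assumes "k \<ge> 1"
  shows "card {t \<in> {1..k}. P (redk k (t + d))} = card {t \<in> {1..k}. P t}"
  using sum_redk_shift[OF assms, of "\<lambda>t. if P t then 1 else (0::nat)" d]
  by (simp add: sum.If_cases Int_def)

lemma sum_card_fibres:
  assumes "finite T" "finite J" "g ` T \<subseteq> J"
  shows "(\<Sum>j\<in>J. card {t \<in> T. P t \<and> g t = j}) = card {t \<in> T. P t}"
proof -
  have "{j \<in> J. P t \<and> g t = j} = (if P t then {g t} else {})" if "t \<in> T" for t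
    using that assms(3) by auto
  then have "(\<Sum>j\<in>J. card {t \<in> T. P t \<and> g t = j}) = (\<Sum>t\<in>T. if P t then 1 else 0)"
    using sum_multicount_gen[OF assms(2,1), of "\<lambda>j t. P t \<and> g t = j" "\<lambda>t. if P t then 1 else 0"]
    by (simp add: if_distrib[of card])
  also have "\<dots> = card {t \<in> T. P t}"
    using assms(1) by (simp add: sum.If_cases Int_def)
  finally show ?thesis .
qed

(* In run t of a discrete PR table, Alice's outcome lies in cell \<alpha> x t and Bob's in cell
   \<beta> y [t + xy]\<^sub>k; unlike the outcomes of a CV PR box, cell labels may repeat. *)
definition pr_table :: "nat \<Rightarrow> (bool \<Rightarrow> nat \<Rightarrow> nat) \<Rightarrow> (bool \<Rightarrow> nat \<Rightarrow> nat) \<Rightarrow> bool \<Rightarrow> bool \<Rightarrow> nat \<Rightarrow> nat \<Rightarrow> real" where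
  "pr_table k \<alpha> \<beta> x y i j =
     real (card {t \<in> {1..k}. \<alpha> x t = i \<and> \<beta> y (redk k (t + of_bool (x \<and> y))) = j}) / real k"

definition pr_labels :: "nat \<Rightarrow> nat \<Rightarrow> (bool \<Rightarrow> nat \<Rightarrow> nat) \<Rightarrow> (bool \<Rightarrow> nat \<Rightarrow> nat) \<Rightarrow> bool" where
  "pr_labels m k \<alpha> \<beta> \<longleftrightarrow> k \<ge> 1 \<and> (\<forall>x t. t \<in> {1..k} \<longrightarrow> \<alpha> x t < m) \<and> (\<forall>y t. t \<in> {1..k} \<longrightarrow> \<beta> y t < m)"

definition discrete_no_signaling :: "nat \<Rightarrow> (bool \<Rightarrow> bool \<Rightarrow> nat \<Rightarrow> nat \<Rightarrow> real) \<Rightarrow> bool" where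
  "discrete_no_signaling m p \<longleftrightarrow> (\<forall>x y i j. p x y i j \<ge> 0) \<and>
     (\<forall>x i. (\<Sum>j<m. p x False i j) = (\<Sum>j<m. p x True i j)) \<and>
     (\<forall>y j. (\<Sum>i<m. p False y i j) = (\<Sum>i<m. p True y i j))"

lemma pr_table_nonneg: "pr_table k \<alpha> \<beta> x y i j \<ge> 0"
  by (simp add: pr_table_def)

lemma pr_table_pos_iff:
  assumes "k \<ge> 1"
  shows "pr_table k \<alpha> \<beta> x y i j > 0 \<longleftrightarrow> (\<exists>t\<in>{1..k}. \<alpha> x t = i \<and> \<beta> y (redk k (t + of_bool (x \<and> y))) = j)"
proof -
  let ?S = "{t \<in> {1..k}. \<alpha> x t = i \<and> \<beta> y (redk k (t + of_bool (x \<and> y))) = j}"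
  have "real k > 0" using assms by simp
  then have "pr_table k \<alpha> \<beta> x y i j > 0 \<longleftrightarrow> card ?S > 0"
    unfolding pr_table_def by (simp only: zero_less_divide_iff of_nat_0_less_iff) (auto simp del: of_nat_0_less_iff)
  also have "\<dots> \<longleftrightarrow> ?S \<noteq> {}"
    by (simp add: card_gt_0_iff)
  finally show ?thesis by blast
qed

lemma pr_table_pos_imp_less:
  assumes "pr_labels m k \<alpha> \<beta>" "pr_table k \<alpha> \<beta> x y i j > 0"
  shows "i < m \<and> j < m"
proof -
  have k: "k \<ge> 1" using assms(1) by (simp add: pr_labels_def)
  then obtain t where "t \<in> {1..k}" "\<alpha> x t = i" "\<beta> y (redk k (t + of_bool (x \<and> y))) = j"
    using assms(2) pr_table_pos_iff by blast
  then show ?thesis using assms(1) redk_in[OF k] unfolding pr_labels_def by blast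
qed

lemma pr_table_row_sum:
  assumes "pr_labels m k \<alpha> \<beta>"
  shows "(\<Sum>j<m. pr_table k \<alpha> \<beta> x y i j) = real (card {t \<in> {1..k}. \<alpha> x t = i}) / real k"
proof -
  have "(\<Sum>j<m. card {t \<in> {1..k}. \<alpha> x t = i \<and> \<beta> y (redk k (t + of_bool (x \<and> y))) = j})
      = card {t \<in> {1..k}. \<alpha> x t = i}"
    by (rule sum_card_fibres) (use assms redk_in in \<open>auto simp: pr_labels_def\<close>)
  then show ?thesis
    unfolding pr_table_def sum_divide_distrib[symmetric] of_nat_sum[symmetric] by simp
qed

lemma pr_table_column_sum:
  assumes "pr_labels m k \<alpha> \<beta>"
  shows "(\<Sum>i<m. pr_table k \<alpha> \<beta> x y i j) = real (card {t \<in> {1..k}. \<beta> y t = j}) / real k"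
proof -
  have "(\<Sum>i<m. card {t \<in> {1..k}. \<beta> y (redk k (t + of_bool (x \<and> y))) = j \<and> \<alpha> x t = i})
      = card {t \<in> {1..k}. \<beta> y (redk k (t + of_bool (x \<and> y))) = j}"
    by (rule sum_card_fibres) (use assms in \<open>auto simp: pr_labels_def\<close>)
  also have "\<dots> = card {t \<in> {1..k}. \<beta> y t = j}"
    using assms unfolding pr_labels_def by (intro card_redk_shift) simp
  finally show ?thesis
    unfolding pr_table_def sum_divide_distrib[symmetric] of_nat_sum[symmetric]
    by (simp only: conj_commute)
qed

lemma pr_table_total:
  assumes "pr_labels m k \<alpha> \<beta>"
  shows "(\<Sum>i<m. \<Sum>j<m. pr_table k \<alpha> \<beta> x y i j) = 1"
proof -
  have "(\<Sum>i<m. card {t \<in> {1..k}. True \<and> \<alpha> x t = i}) = card {t \<in> {1..k}. True}"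
    by (rule sum_card_fibres) (use assms in \<open>auto simp: pr_labels_def\<close>)
  also have "\<dots> = k" by (simp only: Collect_mem_eq simp_thms card_atLeastAtMost diff_Suc_1)
  finally have "(\<Sum>i<m. real (card {t \<in> {1..k}. \<alpha> x t = i})) = real k"
    by (simp flip: of_nat_sum)
  then show ?thesis
    using assms unfolding pr_table_row_sum[OF assms] pr_labels_def
    by (simp add: sum_divide_distrib[symmetric])
qed

lemma discrete_no_signaling_pr_table:
  "pr_labels m k \<alpha> \<beta> \<Longrightarrow> discrete_no_signaling m (pr_table k \<alpha> \<beta>)"
  by (simp add: discrete_no_signaling_def pr_table_nonneg pr_table_row_sum pr_table_column_sum)

section \<open>Decomposition of discrete no-signaling tables\<close>

definition table_support :: "nat \<Rightarrow> (bool \<Rightarrow> bool \<Rightarrow> nat \<Rightarrow> nat \<Rightarrow> real) \<Rightarrow> (bool \<times> bool \<times> nat \<times> nat) set" where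
  "table_support m p = {(x, y, i, j). i < m \<and> j < m \<and> p x y i j > 0}"

lemma finite_table_support: "finite (table_support m p)"
  by (rule finite_subset[of _ "UNIV \<times> UNIV \<times> {..<m} \<times> {..<m}"]) (auto simp: table_support_def)

lemma sum_pos_imp_ex_pos:
  fixes f :: "'a \<Rightarrow> real"
  assumes "(\<Sum>i\<in>A. f i) > 0"
  shows "\<exists>i\<in>A. f i > 0"
  using sum_nonpos[of A f] assms by (meson linorder_not_le)

lemma discrete_no_signaling_row_witness:
  assumes "discrete_no_signaling m p" "p x y i j > 0" "j < m"
  shows "\<exists>j'<m. p x y' i j' > 0"
proof -
  have "(\<Sum>j<m. p x y i j) > 0"
    using assms member_le_sum[of j "{..<m}" "p x y i"] by (fastforce simp: discrete_no_signaling_def)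
  then have "(\<Sum>j<m. p x y' i j) > 0"
    using assms(1) unfolding discrete_no_signaling_def by (cases y; cases y') auto
  then show ?thesis using sum_pos_imp_ex_pos by auto
qed

lemma discrete_no_signaling_column_witness:
  assumes "discrete_no_signaling m p" "p x y i j > 0" "i < m"
  shows "\<exists>i'<m. p x' y i' j > 0"
proof -
  have "(\<Sum>i<m. p x y i j) > 0"
    using assms member_le_sum[of i "{..<m}" "\<lambda>i. p x y i j"] by (fastforce simp: discrete_no_signaling_def)
  then have "(\<Sum>i<m. p x' y i j) > 0"
    using assms(1) unfolding discrete_no_signaling_def by (cases x; cases x') auto
  then show ?thesis using sum_pos_imp_ex_pos by auto
qed

lemma funpow_periodic_point:
  assumes "finite S" "f ` S \<subseteq> S" "b \<in> S"
  obtains c k where "c \<in> S" "k \<ge> 1" "(f ^^ k) c = c"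
proof -
  have orbit: "(f ^^ n) b \<in> S" for n
    using assms(2,3) by (induction n) auto
  have "\<not> inj_on (\<lambda>n. (f ^^ n) b) {0..card S}"
  proof
    assume "inj_on (\<lambda>n. (f ^^ n) b) {0..card S}"
    from card_inj_on_le[OF this _ assms(1)] orbit show False by auto
  qed
  then obtain n n' where "n < n'" "(f ^^ n) b = (f ^^ n') b"
    unfolding inj_on_def by (metis linorder_neqE_nat)
  then have "(f ^^ (n' - n)) ((f ^^ n) b) = (f ^^ n) b"
    by (metis funpow_add le_add_diff_inverse2 less_imp_le o_apply)
  moreover have "n' - n \<ge> 1" using \<open>n < n'\<close> by simp
  ultimately show ?thesis using that[OF orbit] by blast
qed

lemma pr_labels_of_periodic_walk:
  assumes k: "k \<ge> 1" and c: "c \<in> S" "(succ ^^ k) c = c" and closed: "succ ` S \<subseteq> S"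
    and round: "\<And>b. b \<in> S \<Longrightarrow> b < m \<and> a0 b < m \<and> b0 b < m \<and> a1 b < m \<and>
      p False True (a0 b) b > 0 \<and> p False False (a0 b) (b0 b) > 0 \<and>
      p True False (a1 b) (b0 b) > 0 \<and> p True True (a1 b) (succ b) > 0"
  obtains \<alpha> \<beta> where "pr_labels m k \<alpha> \<beta>"
    "\<And>x y t. t \<in> {1..k} \<Longrightarrow> p x y (\<alpha> x t) (\<beta> y (redk k (t + of_bool (x \<and> y)))) > 0"
proof -
  \<comment> \<open>the shift \<open>[t + 1]\<^sub>k\<close> of Bob's outcomes at input 1 is one step along the cycle\<close>
  define b1 where "b1 t = (succ ^^ (t - 1)) c" for t
  have "(succ ^^ n) c \<in> S" for n
    using closed c(1) by (induction n) auto
  then have b1_S: "b1 t \<in> S" for t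
    unfolding b1_def by blast
  have b1_succ: "b1 (redk k (t + 1)) = succ (b1 t)" if t: "t \<in> {1..k}" for t
  proof (cases "t = k")
    case True
    then have "b1 (redk k (t + 1)) = (succ ^^ k) c" using c(2) k by (simp add: redk_def b1_def)
    also have "\<dots> = succ (b1 t)" using True k unfolding b1_def
      by (metis Suc_diff_le diff_Suc_1 funpow.simps(2) o_apply)
    finally show ?thesis .
  next
    case False
    then have "b1 (redk k (t + 1)) = (succ ^^ t) c" using t by (simp add: redk_def b1_def)
    also have "\<dots> = succ (b1 t)" using t unfolding b1_def
      by (metis Suc_diff_1 atLeastAtMost_iff funpow.simps(2) o_apply less_le_trans zero_less_one)
    finally show ?thesis .
  qed
  define \<alpha> where "\<alpha> x t = (if x then a1 (b1 t) else a0 (b1 t))" for x t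
  define \<beta> where "\<beta> y t = (if y then b1 t else b0 (b1 t))" for y t
  show ?thesis
  proof (rule that)
    show "pr_labels m k \<alpha> \<beta>"
      using round[OF b1_S] k by (auto simp: pr_labels_def \<alpha>_def \<beta>_def)
    fix x y t assume t: "t \<in> {1..k}"
    show "p x y (\<alpha> x t) (\<beta> y (redk k (t + of_bool (x \<and> y)))) > 0"
      using round[OF b1_S[of t]] b1_succ[OF t] redk_id[OF t]
      by (cases x; cases y) (simp_all add: \<alpha>_def \<beta>_def)
  qed
qed

lemma pr_labels_in_support:
  assumes p: "discrete_no_signaling m p" and pos: "p x0 y0 i0 j0 > 0" "i0 < m" "j0 < m"
  obtains k \<alpha> \<beta> where "pr_labels m k \<alpha> \<beta>"
    "\<And>x y t. t \<in> {1..k} \<Longrightarrow> p x y (\<alpha> x t) (\<beta> y (redk k (t + of_bool (x \<and> y)))) > 0"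
proof -
  define row where "row x y i = (SOME j. j < m \<and> p x y i j > 0)" for x y i
  define col where "col x y j = (SOME i. i < m \<and> p x y i j > 0)" for x y j
  have row: "row x y' i < m \<and> p x y' i (row x y' i) > 0" if "p x y i j > 0" "j < m" for x y y' i j
    unfolding row_def by (rule someI_ex) (use discrete_no_signaling_row_witness[OF p that] in blast)
  have col: "col x' y j < m \<and> p x' y (col x' y j) j > 0" if "p x y i j > 0" "i < m" for x x' y i j
    unfolding col_def by (rule someI_ex) (use discrete_no_signaling_column_witness[OF p that] in blast)
  \<comment> \<open>one round of the walk: (1,1) \<rightarrow> (0,1) \<rightarrow> (0,0) \<rightarrow> (1,0) \<rightarrow> (1,1)\<close>
  define a0 where "a0 b = col False True b" for b
  define b0 where "b0 b = row False False (a0 b)" for b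
  define a1 where "a1 b = col True False (b0 b)" for b
  define succ where "succ b = row True True (a1 b)" for b
  define S where "S = {b. b < m \<and> (\<exists>i<m. p True True i b > 0)}"
  have round: "b < m \<and> a0 b < m \<and> b0 b < m \<and> a1 b < m \<and>
      p False True (a0 b) b > 0 \<and> p False False (a0 b) (b0 b) > 0 \<and>
      p True False (a1 b) (b0 b) > 0 \<and> p True True (a1 b) (succ b) > 0"
    if "b \<in> S" for b
  proof -
    from that obtain i where i: "i < m" "p True True i b > 0" "b < m" by (auto simp: S_def)
    have 1: "a0 b < m" "p False True (a0 b) b > 0"
      using col[OF i(2,1)] unfolding a0_def by blast+
    have 2: "b0 b < m" "p False False (a0 b) (b0 b) > 0"
      using row[OF 1(2) i(3)] unfolding b0_def by blast+
    have 3: "a1 b < m" "p True False (a1 b) (b0 b) > 0"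
      using col[OF 2(2) 1(1)] unfolding a1_def by blast+
    have "p True True (a1 b) (succ b) > 0"
      using row[OF 3(2) 2(1)] unfolding succ_def by blast
    with 1 2 3 i show ?thesis by blast
  qed
  have closed: "succ ` S \<subseteq> S"
  proof
    fix b' assume "b' \<in> succ ` S"
    then obtain b where b: "b \<in> S" "b' = succ b" by blast
    have "succ b < m"
      using row[of True False "a1 b" "b0 b" True] round[OF b(1)] unfolding succ_def by blast
    then show "b' \<in> S" using round[OF b(1)] b(2) unfolding S_def by blast
  qed
  have "row x0 True i0 \<in> S"
    using row[OF pos(1,3), of True] col[of x0 True i0 "row x0 True i0" True] pos(2)
    unfolding S_def by blast
  moreover have "finite S" by (rule finite_subset[of _ "{..<m}"]) (auto simp: S_def)
  ultimately obtain c k where c: "c \<in> S" "k \<ge> 1" "(succ ^^ k) c = c"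
    using funpow_periodic_point[OF _ closed] by blast
  show ?thesis
    by (rule pr_labels_of_periodic_walk[OF c(2,1,3) closed round]) (auto intro: that)
qed

lemma exists_largest_multiple_below:
  fixes p q :: "'a \<Rightarrow> real"
  assumes "finite Z" "Z \<noteq> {}" "\<And>z. z \<in> Z \<Longrightarrow> q z > 0 \<and> p z > 0"
  obtains c where "c > 0" "\<And>z. z \<in> Z \<Longrightarrow> c * q z \<le> p z" "\<exists>z\<in>Z. c * q z = p z"
proof -
  define c where "c = Min ((\<lambda>z. p z / q z) ` Z)"
  have "c \<in> (\<lambda>z. p z / q z) ` Z"
    unfolding c_def using assms(1,2) by (intro Min_in) auto
  then obtain z0 where z0: "z0 \<in> Z" "c = p z0 / q z0" by blast
  have le: "c \<le> p z / q z" if "z \<in> Z" for z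
    unfolding c_def using assms(1) that by simp
  show ?thesis
  proof (rule that)
    show "c > 0" using z0 assms(3) by simp
    show "c * q z \<le> p z" if "z \<in> Z" for z
      using le[OF that] assms(3)[OF that] by (simp add: pos_le_divide_eq)
    show "\<exists>z\<in>Z. c * q z = p z"
      using z0 assms(3)[OF z0(1)] by (intro bexI[of _ z0]) auto
  qed
qed

lemma remove_pr_table:
  assumes p: "discrete_no_signaling m p" and ne: "table_support m p \<noteq> {}"
  obtains c k \<alpha> \<beta> where "c > 0" "pr_labels m k \<alpha> \<beta>"
    "discrete_no_signaling m (\<lambda>x y i j. p x y i j - c * pr_table k \<alpha> \<beta> x y i j)"
    "table_support m (\<lambda>x y i j. p x y i j - c * pr_table k \<alpha> \<beta> x y i j) \<subset> table_support m p"
proof -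
  obtain x0 y0 i0 j0 where "p x0 y0 i0 j0 > 0" "i0 < m" "j0 < m"
    using ne by (auto simp: table_support_def)
  then obtain k \<alpha> \<beta> where lab: "pr_labels m k \<alpha> \<beta>"
    and inside: "\<And>x y t. t \<in> {1..k} \<Longrightarrow> p x y (\<alpha> x t) (\<beta> y (redk k (t + of_bool (x \<and> y)))) > 0"
    using pr_labels_in_support[OF p] by metis
  define q where "q = pr_table k \<alpha> \<beta>"
  have k: "k \<ge> 1" using lab by (simp add: pr_labels_def)
  have q_nonneg: "q x y i j \<ge> 0" for x y i j by (simp add: q_def pr_table_nonneg)
  have q_pos: "p x y i j > 0" if "q x y i j > 0" for x y i j
    using that inside by (auto simp: q_def pr_table_pos_iff[OF k])
  have q_support: "(x, y, i, j) \<in> table_support m q \<longleftrightarrow> q x y i j > 0" for x y i j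
    using pr_table_pos_imp_less[OF lab] by (auto simp: table_support_def q_def)
  have "q False False (\<alpha> False 1) (\<beta> False 1) > 0"
    using k by (auto simp: q_def pr_table_pos_iff redk_id intro: bexI[of _ 1])
  then have "table_support m q \<noteq> {}" using q_support by blast
  then obtain c where c: "c > 0" and below: "\<And>x y i j. q x y i j > 0 \<Longrightarrow> c * q x y i j \<le> p x y i j"
    and tight: "\<exists>z\<in>table_support m q. c * (case z of (x, y, i, j) \<Rightarrow> q x y i j) = (case z of (x, y, i, j) \<Rightarrow> p x y i j)"
    using exists_largest_multiple_below[OF finite_table_support, of m q "\<lambda>(x, y, i, j). q x y i j"
        "\<lambda>(x, y, i, j). p x y i j"] q_support q_pos by fastforce
  define p' where "p' x y i j = p x y i j - c * q x y i j" for x y i j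
  have "p' x y i j \<ge> 0" for x y i j
    using below[of x y i j] q_nonneg[of x y i j] p
    by (cases "q x y i j > 0") (auto simp: p'_def discrete_no_signaling_def)
  moreover have "discrete_no_signaling m q"
    unfolding q_def by (rule discrete_no_signaling_pr_table[OF lab])
  ultimately have "discrete_no_signaling m p'"
    using p unfolding discrete_no_signaling_def p'_def
    by (simp add: sum_subtractf sum_distrib_left[symmetric])
  moreover have "table_support m p' \<subset> table_support m p"
  proof
    show "table_support m p' \<subseteq> table_support m p"
    proof -
      have "p' x y i j \<le> p x y i j" for x y i j using c q_nonneg[of x y i j] by (simp add: p'_def)
      then show ?thesis by (auto simp: table_support_def intro: less_le_trans)
    qed
    from tight obtain x y i j where "(x, y, i, j) \<in> table_support m q" "c * q x y i j = p x y i j"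
      by auto
    then have "(x, y, i, j) \<in> table_support m p" "(x, y, i, j) \<notin> table_support m p'"
      using q_pos by (auto simp: table_support_def p'_def)
    then show "table_support m p' \<noteq> table_support m p" by blast
  qed
  ultimately show ?thesis
    using that[OF c lab] unfolding p'_def q_def by blast
qed

definition pr_decomposable :: "nat \<Rightarrow> (bool \<Rightarrow> bool \<Rightarrow> nat \<Rightarrow> nat \<Rightarrow> real) \<Rightarrow> bool" where
  "pr_decomposable m p \<longleftrightarrow> (\<exists>(n::nat) (c :: nat \<Rightarrow> real) k \<alpha> \<beta>.
     (\<forall>l<n. c l \<ge> 0 \<and> pr_labels m (k l) (\<alpha> l) (\<beta> l)) \<and>
     (\<forall>x y i j. i < m \<longrightarrow> j < m \<longrightarrow> p x y i j = (\<Sum>l<n. c l * pr_table (k l) (\<alpha> l) (\<beta> l) x y i j)))"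

lemma pr_decomposable_add_pr_table:
  assumes "pr_decomposable m p" "c \<ge> 0" "pr_labels m k \<alpha> \<beta>"
  shows "pr_decomposable m (\<lambda>x y i j. p x y i j + c * pr_table k \<alpha> \<beta> x y i j)"
proof -
  obtain n :: nat and cs ks \<alpha>s \<beta>s where
    H: "\<forall>l<n. cs l \<ge> 0 \<and> pr_labels m (ks l) (\<alpha>s l) (\<beta>s l)"
       "\<forall>x y i j. i < m \<longrightarrow> j < m \<longrightarrow> p x y i j = (\<Sum>l<n. cs l * pr_table (ks l) (\<alpha>s l) (\<beta>s l) x y i j)"
    using assms(1) unfolding pr_decomposable_def by blast
  have "(\<Sum>l<Suc n. (cs(n := c)) l * pr_table ((ks(n := k)) l) ((\<alpha>s(n := \<alpha>)) l) ((\<beta>s(n := \<beta>)) l) x y i j)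
      = (\<Sum>l<n. cs l * pr_table (ks l) (\<alpha>s l) (\<beta>s l) x y i j) + c * pr_table k \<alpha> \<beta> x y i j" for x y i j
    unfolding sum.lessThan_Suc by (auto intro!: sum.cong)
  then show ?thesis
    unfolding pr_decomposable_def using H assms(2,3)
    by (intro exI[of _ "Suc n"] exI[of _ "cs(n := c)"] exI[of _ "ks(n := k)"]
        exI[of _ "\<alpha>s(n := \<alpha>)"] exI[of _ "\<beta>s(n := \<beta>)"]) auto
qed

lemma discrete_no_signaling_decomposable:
  "discrete_no_signaling m p \<Longrightarrow> pr_decomposable m p"
proof (induction "card (table_support m p)" arbitrary: p rule: less_induct)
  case less
  show ?case
  proof (cases "table_support m p = {}")
    case True
    have "p x y i j = 0" if "i < m" "j < m" for x y i j
    proof -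
      have "\<not> p x y i j > 0" using True that by (auto simp: table_support_def)
      moreover have "p x y i j \<ge> 0" using less.prems by (simp add: discrete_no_signaling_def)
      ultimately show ?thesis by linarith
    qed
    then show ?thesis unfolding pr_decomposable_def by (intro exI[of _ 0]) auto
  next
    case False
    then obtain c k \<alpha> \<beta> where c: "c > 0" "pr_labels m k \<alpha> \<beta>"
      and rest: "discrete_no_signaling m (\<lambda>x y i j. p x y i j - c * pr_table k \<alpha> \<beta> x y i j)"
        "table_support m (\<lambda>x y i j. p x y i j - c * pr_table k \<alpha> \<beta> x y i j) \<subset> table_support m p"
      by (rule remove_pr_table[OF less.prems])
    have "card (table_support m (\<lambda>x y i j. p x y i j - c * pr_table k \<alpha> \<beta> x y i j))
        < card (table_support m p)"
      by (rule psubset_card_mono[OF finite_table_support rest(2)])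
    then have "pr_decomposable m (\<lambda>x y i j. p x y i j - c * pr_table k \<alpha> \<beta> x y i j)"
      using less.hyps rest(1) by blast
    from pr_decomposable_add_pr_table[OF this _ c(2), of c] c(1) show ?thesis by simp
  qed
qed

definition pr_outcomes :: "real \<Rightarrow> nat \<Rightarrow> (bool \<Rightarrow> nat \<Rightarrow> real) \<Rightarrow> (bool \<Rightarrow> nat \<Rightarrow> real) \<Rightarrow> bool" where
  "pr_outcomes K k a b \<longleftrightarrow> k \<ge> 1 \<and> (\<forall>x. inj_on (a x) {1..k}) \<and> (\<forall>y. inj_on (b y) {1..k}) \<and>
     (\<forall>x t. t \<in> {1..k} \<longrightarrow> a x t \<in> {-K..K}) \<and> (\<forall>y t. t \<in> {1..k} \<longrightarrow> b y t \<in> {-K..K})"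

definition pr_behaviour :: "real \<Rightarrow> nat \<Rightarrow> (bool \<Rightarrow> nat \<Rightarrow> real) \<Rightarrow> (bool \<Rightarrow> nat \<Rightarrow> real) \<Rightarrow> behaviour" where
  "pr_behaviour K k a b x y =
     discrete_measure K {1..k} (\<lambda>_. 1 / real k) (\<lambda>t. (a x t, b y (redk k (t + of_bool (x \<and> y)))))"

lemma pr_outcomes_in_sq:
  assumes "pr_outcomes K k a b"
  shows "(\<lambda>t. (a x t, b y (redk k (t + of_bool (x \<and> y))))) ` {1..k} \<subseteq> sq K"
  using assms redk_in[of k] by (auto simp: pr_outcomes_def sq_def)

lemma emeasure_pr_behaviour:
  assumes "pr_outcomes K k a b" "A \<in> sets (sqM K)"
  shows "emeasure (pr_behaviour K k a b x y) A =
    ennreal (real (card {t \<in> {1..k}. (a x t, b y (redk k (t + of_bool (x \<and> y)))) \<in> A}) / real k)"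
  unfolding pr_behaviour_def
  by (subst emeasure_discrete_measure[OF _ _ pr_outcomes_in_sq[OF assms(1)] assms(2)]) auto

lemma is_PR_box_pr_behaviour:
  assumes "pr_outcomes K k a b"
  shows "is_PR_box K (pr_behaviour K k a b)"
proof -
  have "is_behaviour K (pr_behaviour K k a b)"
    unfolding is_behaviour_def pr_behaviour_def
    using assms prob_space_discrete_measure[OF _ _ pr_outcomes_in_sq[OF assms]]
    by (simp add: pr_outcomes_def)
  then show ?thesis
    using assms emeasure_pr_behaviour[OF assms] unfolding is_PR_box_def pr_outcomes_def
    by (intro conjI exI[of _ k] exI[of _ a] exI[of _ b]) (auto simp: pr_behaviour_def)
qed

lemma prob_space_pr_behaviour: "pr_outcomes K k a b \<Longrightarrow> prob_space (pr_behaviour K k a b x y)"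
  using is_PR_box_pr_behaviour by (simp add: is_PR_box_def is_behaviour_def)

definition pr_mixture :: "real \<Rightarrow> nat \<Rightarrow> (nat \<Rightarrow> real) \<Rightarrow> (nat \<Rightarrow> nat) \<Rightarrow>
    (nat \<Rightarrow> bool \<Rightarrow> nat \<Rightarrow> real) \<Rightarrow> (nat \<Rightarrow> bool \<Rightarrow> nat \<Rightarrow> real) \<Rightarrow> behaviour" where
  "pr_mixture K n c k a b x y =
     discrete_measure K (SIGMA l:{..<n}. {1..k l}) (\<lambda>(l, t). c l / real (k l))
       (\<lambda>(l, t). (a l x t, b l y (redk (k l) (t + of_bool (x \<and> y)))))"

lemma emeasure_pr_mixture:
  assumes "\<forall>l<n. c l \<ge> 0 \<and> pr_outcomes K (k l) (a l) (b l)" "A \<in> sets (sqM K)"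
  shows "emeasure (pr_mixture K n c k a b x y) A =
    (\<Sum>l<n. ennreal (c l) * emeasure (pr_behaviour K (k l) (a l) (b l) x y) A)"
proof -
  let ?g = "\<lambda>(l, t). (a l x t, b l y (redk (k l) (t + of_bool (x \<and> y))))"
  let ?T = "\<lambda>l. {t \<in> {1..k l}. (a l x t, b l y (redk (k l) (t + of_bool (x \<and> y)))) \<in> A}"
  have "?g z \<in> sq K" if "z \<in> (SIGMA l:{..<n}. {1..k l})" for z
  proof -
    from that obtain l t where "z = (l, t)" "l < n" "t \<in> {1..k l}" by blast
    with pr_outcomes_in_sq[of K "k l" "a l" "b l" x y] assms(1) show ?thesis by auto
  qed
  then have "?g ` (SIGMA l:{..<n}. {1..k l}) \<subseteq> sq K" by blast
  then have "emeasure (pr_mixture K n c k a b x y) A =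
      ennreal (\<Sum>z\<in>{z \<in> SIGMA l:{..<n}. {1..k l}. ?g z \<in> A}. (\<lambda>(l, t). c l / real (k l)) z)"
    unfolding pr_mixture_def using assms
    by (intro emeasure_discrete_measure) (auto simp: pr_outcomes_def)
  also have "{z \<in> SIGMA l:{..<n}. {1..k l}. ?g z \<in> A} = (SIGMA l:{..<n}. ?T l)"
    by auto
  also have "(\<Sum>z\<in>(SIGMA l:{..<n}. ?T l). (\<lambda>(l, t). c l / real (k l)) z) =
      (\<Sum>l<n. \<Sum>t\<in>?T l. c l / real (k l))"
    by (rule sum.Sigma[symmetric]) auto
  also have "\<dots> = (\<Sum>l<n. c l * (real (card (?T l)) / real (k l)))"
    by (simp add: ac_simps)
  also have "ennreal \<dots> = (\<Sum>l<n. ennreal (c l * (real (card (?T l)) / real (k l))))"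
    by (rule sum_ennreal[symmetric]) (use assms(1) in auto)
  also have "\<dots> = (\<Sum>l<n. ennreal (c l) * ennreal (real (card (?T l)) / real (k l)))"
    using assms(1) by (intro sum.cong refl ennreal_mult) auto
  also have "\<dots> = (\<Sum>l<n. ennreal (c l) * emeasure (pr_behaviour K (k l) (a l) (b l) x y) A)"
    using assms by (intro sum.cong refl) (simp add: emeasure_pr_behaviour)
  finally show ?thesis .
qed

lemma in_conv_PR_pr_mixture:
  assumes comp: "\<forall>l<n. c l \<ge> 0 \<and> pr_outcomes K (k l) (a l) (b l)" and sum1: "(\<Sum>l<n. c l) = 1"
  shows "in_conv_PR K (pr_mixture K n c k a b)"
proof -
  have "emeasure (pr_mixture K n c k a b x y) (space (pr_mixture K n c k a b x y)) = 1" for x y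
  proof -
    have "emeasure (pr_mixture K n c k a b x y) (sq K) = (\<Sum>l<n. ennreal (c l))"
    proof -
      have "emeasure (pr_behaviour K (k l) (a l) (b l) x y) (sq K) = 1" if "l < n" for l
        using prob_space.emeasure_space_1[OF prob_space_pr_behaviour] comp that
        by (simp add: pr_behaviour_def discrete_measure_def)
      then show ?thesis
        using emeasure_pr_mixture[OF comp, of "sq K"] by (simp add: sets.top[of "sqM K", simplified])
    qed
    also have "\<dots> = ennreal (\<Sum>l<n. c l)"
      using comp by (subst sum_ennreal) auto
    also have "\<dots> = 1" using sum1 by simp
    finally show ?thesis by (simp add: pr_mixture_def discrete_measure_def)
  qed
  then have "is_behaviour K (pr_mixture K n c k a b)"
    by (simp add: is_behaviour_def prob_spaceI pr_mixture_def)
  then show ?thesis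
    unfolding in_conv_PR_def using comp sum1 emeasure_pr_mixture[OF comp] is_PR_box_pr_behaviour
    by (intro conjI exI[of _ n] exI[of _ c] exI[of _ "\<lambda>l. pr_behaviour K (k l) (a l) (b l)"])
       (auto simp: pr_mixture_def)
qed

lemma measure_pr_mixture:
  assumes comp: "\<forall>l<n. c l \<ge> 0 \<and> pr_outcomes K (k l) (a l) (b l)" and A: "A \<in> sets (sqM K)"
  shows "measure (pr_mixture K n c k a b x y) A =
    (\<Sum>l<n. c l * measure (pr_behaviour K (k l) (a l) (b l) x y) A)"
proof -
  have fin: "emeasure (pr_behaviour K (k l) (a l) (b l) x y) A \<noteq> \<top>" if "l < n" for l
    using finite_measure.emeasure_finite[OF prob_space.finite_measure, OF prob_space_pr_behaviour] comp that by blast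
  have "measure (pr_mixture K n c k a b x y) A =
      enn2real (\<Sum>l<n. ennreal (c l) * emeasure (pr_behaviour K (k l) (a l) (b l) x y) A)"
    by (simp add: measure_def emeasure_pr_mixture[OF comp A])
  also have "\<dots> = (\<Sum>l<n. enn2real (ennreal (c l) * emeasure (pr_behaviour K (k l) (a l) (b l) x y) A))"
    using fin by (subst enn2real_sum) (auto simp: ennreal_mult_less_top top.not_eq_extremum)
  also have "\<dots> = (\<Sum>l<n. c l * measure (pr_behaviour K (k l) (a l) (b l) x y) A)"
    using comp by (intro sum.cong refl) (simp add: enn2real_mult measure_def)
  finally show ?thesis .
qed

(* Run t is placed at relative position t/(k+1) inside its cell, which keeps the outcomes
   of different runs distinct. *)
definition grid_outcomes :: "real \<Rightarrow> nat \<Rightarrow> nat \<Rightarrow> (bool \<Rightarrow> nat \<Rightarrow> nat) \<Rightarrow> bool \<Rightarrow> nat \<Rightarrow> real" where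
  "grid_outcomes K m k \<alpha> x t = grid_point K m (\<alpha> x t) (real t / (real k + 1))"

lemma cell_index_grid_outcomes:
  assumes "K > 0" "\<alpha> x t < m" "t \<le> k"
  shows "cell_index K m (grid_outcomes K m k \<alpha> x t) = \<alpha> x t"
  unfolding grid_outcomes_def using assms by (intro cell_index_grid_point) auto

lemma pr_outcomes_grid_outcomes:
  assumes K: "K > 0" and lab: "pr_labels m k \<alpha> \<beta>"
  shows "pr_outcomes K k (grid_outcomes K m k \<alpha>) (grid_outcomes K m k \<beta>)"
proof -
  have m: "m \<ge> 1" using lab by (force simp: pr_labels_def)
  have inj: "inj_on (grid_outcomes K m k \<gamma> x) {1..k}" if "\<forall>t. t \<in> {1..k} \<longrightarrow> \<gamma> x t < m" for \<gamma> x
  proof (rule inj_onI)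
    fix t t' assume t: "t \<in> {1..k}" "t' \<in> {1..k}"
      and eq: "grid_outcomes K m k \<gamma> x t = grid_outcomes K m k \<gamma> x t'"
    then have "\<gamma> x t = \<gamma> x t'"
      using cell_index_grid_outcomes[OF K, of \<gamma> x _ m k] that by (metis atLeastAtMost_iff)
    with eq have "grid_point K m (\<gamma> x t) (real t / (real k + 1)) = grid_point K m (\<gamma> x t) (real t' / (real k + 1))"
      by (simp add: grid_outcomes_def)
    then have "real t / (real k + 1) = real t' / (real k + 1)"
      by (rule grid_point_inj[OF K m])
    then show "t = t'" by (simp add: divide_cancel_right)
  qed
  have range: "grid_outcomes K m k \<gamma> x t \<in> {-K..K}" if "\<gamma> x t < m" "t \<le> k" for \<gamma> x t
    unfolding grid_outcomes_def using that K by (intro grid_point_in_interval) auto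
  show ?thesis
    using lab inj range unfolding pr_outcomes_def pr_labels_def by auto
qed

lemma measure_cell_grid_pr_behaviour:
  assumes K: "K > 0" and lab: "pr_labels m k \<alpha> \<beta>"
  shows "measure (pr_behaviour K k (grid_outcomes K m k \<alpha>) (grid_outcomes K m k \<beta>) x y) (cell K m i j)
    = pr_table k \<alpha> \<beta> x y i j"
proof -
  let ?a = "grid_outcomes K m k \<alpha>" and ?b = "grid_outcomes K m k \<beta>"
  have out: "pr_outcomes K k ?a ?b" by (rule pr_outcomes_grid_outcomes[OF K lab])
  have k: "k \<ge> 1" using lab by (simp add: pr_labels_def)
  have "{t \<in> {1..k}. (?a x t, ?b y (redk k (t + of_bool (x \<and> y)))) \<in> cell K m i j}
      = {t \<in> {1..k}. \<alpha> x t = i \<and> \<beta> y (redk k (t + of_bool (x \<and> y))) = j}"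
  proof (intro Collect_cong conj_cong refl)
    fix t assume t: "t \<in> {1..k}"
    have r: "redk k (t + of_bool (x \<and> y)) \<in> {1..k}" by (rule redk_in[OF k])
    show "(?a x t, ?b y (redk k (t + of_bool (x \<and> y)))) \<in> cell K m i j \<longleftrightarrow>
        \<alpha> x t = i \<and> \<beta> y (redk k (t + of_bool (x \<and> y))) = j"
      using t r lab out cell_index_grid_outcomes[OF K] unfolding cell_def sq_def pr_labels_def pr_outcomes_def
      by auto
  qed
  then show ?thesis
    using emeasure_pr_behaviour[OF out cell_sets, of x y m i j]
    by (simp add: measure_def pr_table_def)
qed

section \<open>Weak limits of mixtures of PR boxes are no-signaling\<close>

lemma is_PR_box_marginals:
  assumes "is_PR_box K \<nu>" "A \<in> sets borel" "A \<subseteq> {-K..K}"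
  shows "emeasure (\<nu> x False) (A \<times> {-K..K}) = emeasure (\<nu> x True) (A \<times> {-K..K})"
    and "emeasure (\<nu> False y) ({-K..K} \<times> A) = emeasure (\<nu> True y) ({-K..K} \<times> A)"
proof -
  obtain k a b where k: "k \<ge> 1"
    and a: "\<And>x j. j \<in> {1..k} \<Longrightarrow> a x j \<in> {-K..K}" and b: "\<And>y j. j \<in> {1..k} \<Longrightarrow> b y j \<in> {-K..K}"
    and em: "\<And>x y. \<forall>S \<in> sets (\<nu> x y). emeasure (\<nu> x y) S =
       ennreal (real (card {j \<in> {1..k}. (a x j, b y (redk k (j + of_bool (x \<and> y)))) \<in> S}) / real k)"
    using assms(1) unfolding is_PR_box_def by blast
  have "sets (\<nu> x y) = sets (sqM K)" for x y
    using assms(1) by (simp add: is_PR_box_def is_behaviour_def)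
  then have em_rect: "emeasure (\<nu> x y) S =
       ennreal (real (card {j \<in> {1..k}. (a x j, b y (redk k (j + of_bool (x \<and> y)))) \<in> S}) / real k)"
    if "S \<in> {A \<times> {-K..K}, {-K..K} \<times> A}" for x y S
    using em that rectangle_sets[OF assms(2) _ assms(3)] rectangle_sets[OF _ assms(2) _ assms(3)] by auto
  have "{j \<in> {1..k}. (a x j, b y (redk k (j + of_bool (x \<and> y)))) \<in> A \<times> {-K..K}} = {j \<in> {1..k}. a x j \<in> A}" for y
    using b redk_in[OF k] by auto
  then have "emeasure (\<nu> x y) (A \<times> {-K..K}) = ennreal (real (card {j \<in> {1..k}. a x j \<in> A}) / real k)" for y
    using em_rect[of "A \<times> {-K..K}" x y] by simp
  then show "emeasure (\<nu> x False) (A \<times> {-K..K}) = emeasure (\<nu> x True) (A \<times> {-K..K})" by simp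
  have "{j \<in> {1..k}. (a x j, b y (redk k (j + of_bool (x \<and> y)))) \<in> {-K..K} \<times> A}
      = {j \<in> {1..k}. b y (redk k (j + of_bool (x \<and> y))) \<in> A}" for x
    using a by auto
  then have "card {j \<in> {1..k}. (a x j, b y (redk k (j + of_bool (x \<and> y)))) \<in> {-K..K} \<times> A}
      = card {j \<in> {1..k}. b y j \<in> A}" for x
    using card_redk_shift[OF k, of "\<lambda>j. b y j \<in> A"] by simp
  then have "emeasure (\<nu> x y) ({-K..K} \<times> A) = ennreal (real (card {j \<in> {1..k}. b y j \<in> A}) / real k)" for x
    using em_rect[of "{-K..K} \<times> A" x y] by simp
  then show "emeasure (\<nu> False y) ({-K..K} \<times> A) = emeasure (\<nu> True y) ({-K..K} \<times> A)" by simp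
qed

lemma in_conv_PR_no_signaling:
  assumes "in_conv_PR K \<mu>"
  shows "no_signaling K \<mu>"
proof -
  obtain n :: nat and c \<nu> where comp: "\<forall>i<n. c i \<ge> 0 \<and> is_PR_box K (\<nu> i)"
    and mix: "\<And>x y. \<forall>S \<in> sets (\<mu> x y). emeasure (\<mu> x y) S = (\<Sum>i<n. ennreal (c i) * emeasure (\<nu> i x y) S)"
    using assms unfolding in_conv_PR_def by blast
  have beh: "is_behaviour K \<mu>" using assms by (simp add: in_conv_PR_def)
  have mix_eq: "emeasure (\<mu> x y) S = emeasure (\<mu> x' y') S"
    if "S \<in> sets (sqM K)" "\<And>i. i < n \<Longrightarrow> emeasure (\<nu> i x y) S = emeasure (\<nu> i x' y') S" for x y x' y' S
  proof -
    have "S \<in> sets (\<mu> x y)" "S \<in> sets (\<mu> x' y')" using beh that(1) by (auto simp: is_behaviour_def)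
    then show ?thesis using mix that(2) by (auto intro!: sum.cong)
  qed
  show ?thesis
    unfolding no_signaling_def
  proof (intro conjI beh allI impI)
    fix x A assume A: "A \<in> sets (borel :: real measure) \<and> A \<subseteq> {-K..K}"
    then have "emeasure (\<mu> x False) (A \<times> {-K..K}) = emeasure (\<mu> x True) (A \<times> {-K..K})"
      using comp is_PR_box_marginals(1) by (intro mix_eq rectangle_sets) auto
    then show "measure (\<mu> x False) (A \<times> {-K..K}) = measure (\<mu> x True) (A \<times> {-K..K})"
      by (simp add: measure_def)
  next
    fix y B assume B: "B \<in> sets (borel :: real measure) \<and> B \<subseteq> {-K..K}"
    then have "emeasure (\<mu> False y) ({-K..K} \<times> B) = emeasure (\<mu> True y) ({-K..K} \<times> B)"
      using comp is_PR_box_marginals(2) by (intro mix_eq rectangle_sets) auto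
    then show "measure (\<mu> False y) ({-K..K} \<times> B) = measure (\<mu> True y) ({-K..K} \<times> B)"
      by (simp add: measure_def)
  qed
qed

lemma emeasure_distr_fst_sqM:
  assumes "sets M = sets (sqM K)" "A \<in> sets borel"
  shows "emeasure (distr M borel fst) A = emeasure M ((A \<inter> {-K..K}) \<times> {-K..K})"
proof -
  have "fst \<in> borel_measurable M"
    using fst_measurable_sqM measurable_cong_sets[OF assms(1) refl] by blast
  moreover have "fst -` A \<inter> space M = (A \<inter> {-K..K}) \<times> {-K..K}"
    using sets_eq_imp_space_eq[OF assms(1)] by (auto simp: sq_def)
  ultimately show ?thesis using assms(2) by (simp add: emeasure_distr)
qed

lemma emeasure_distr_snd_sqM:
  assumes "sets M = sets (sqM K)" "A \<in> sets borel"
  shows "emeasure (distr M borel snd) A = emeasure M ({-K..K} \<times> (A \<inter> {-K..K}))"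
proof -
  have "snd \<in> borel_measurable M"
    using snd_measurable_sqM measurable_cong_sets[OF assms(1) refl] by blast
  moreover have "snd -` A \<inter> space M = {-K..K} \<times> (A \<inter> {-K..K})"
    using sets_eq_imp_space_eq[OF assms(1)] by (auto simp: sq_def)
  ultimately show ?thesis using assms(2) by (simp add: emeasure_distr)
qed

lemma no_signaling_iff_marginals:
  assumes "is_behaviour K \<mu>"
  shows "no_signaling K \<mu> \<longleftrightarrow>
    (\<forall>x. distr (\<mu> x False) borel fst = distr (\<mu> x True) borel fst) \<and>
    (\<forall>y. distr (\<mu> False y) borel snd = distr (\<mu> True y) borel snd)"
proof -
  have sets: "sets (\<mu> x y) = sets (sqM K)" and prob: "prob_space (\<mu> x y)" for x y
    using assms by (auto simp: is_behaviour_def)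
  have fst_eq: "emeasure (distr (\<mu> x y) borel fst) A = ennreal (measure (\<mu> x y) ((A \<inter> {-K..K}) \<times> {-K..K}))"
    and snd_eq: "emeasure (distr (\<mu> x y) borel snd) A = ennreal (measure (\<mu> x y) ({-K..K} \<times> (A \<inter> {-K..K})))"
    if "A \<in> sets borel" for A x y
    using emeasure_distr_fst_sqM[OF sets that] emeasure_distr_snd_sqM[OF sets that]
      finite_measure.emeasure_eq_measure[OF prob_space.finite_measure[OF prob]] by simp_all
  show ?thesis
  proof
    assume ns: "no_signaling K \<mu>"
    have "distr (\<mu> x False) borel fst = distr (\<mu> x True) borel fst" for x
      by (rule measure_eqI) (use ns in \<open>auto simp: fst_eq no_signaling_def\<close>)
    moreover have "distr (\<mu> False y) borel snd = distr (\<mu> True y) borel snd" for y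
      by (rule measure_eqI) (use ns in \<open>auto simp: snd_eq no_signaling_def\<close>)
    ultimately show "(\<forall>x. distr (\<mu> x False) borel fst = distr (\<mu> x True) borel fst) \<and>
        (\<forall>y. distr (\<mu> False y) borel snd = distr (\<mu> True y) borel snd)" by blast
  next
    assume marg: "(\<forall>x. distr (\<mu> x False) borel fst = distr (\<mu> x True) borel fst) \<and>
        (\<forall>y. distr (\<mu> False y) borel snd = distr (\<mu> True y) borel snd)"
    have "measure (\<mu> x False) (A \<times> {-K..K}) = measure (\<mu> x True) (A \<times> {-K..K})"
      if "A \<in> sets borel" "A \<subseteq> {-K..K}" for x A
      using fst_eq[OF that(1), of x False] fst_eq[OF that(1), of x True] marg that(2)
      by (simp add: Int_absorb2)
    moreover have "measure (\<mu> False y) ({-K..K} \<times> B) = measure (\<mu> True y) ({-K..K} \<times> B)"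
      if "B \<in> sets borel" "B \<subseteq> {-K..K}" for y B
      using snd_eq[OF that(1), of False y] snd_eq[OF that(1), of True y] marg that(2)
      by (simp add: Int_absorb2)
    ultimately show "no_signaling K \<mu>"
      using assms by (simp add: no_signaling_def)
  qed
qed

lemma cdf_le_of_cts_step_integral_le:
  assumes M: "real_distribution M" and N: "real_distribution N"
    and le: "\<And>a b. a < b \<Longrightarrow> integral\<^sup>L M (cts_step a b) \<le> integral\<^sup>L N (cts_step a b)"
  shows "cdf M x \<le> cdf N x"
proof (rule tendsto_lowerbound)
  show "(cdf N \<longlongrightarrow> cdf N x) (at_right x)"
    using finite_borel_measure.cdf_is_right_cont[OF real_distribution.finite_borel_measure_M[OF N]]
    by (simp add: continuous_within)
  have "cdf M x \<le> cdf N y" if "x < y" for y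
    using real_distribution.cdf_cts_step(1)[OF M that] le[OF that]
      real_distribution.cdf_cts_step(2)[OF N that] by linarith
  then show "\<forall>\<^sub>F y in at_right x. cdf M x \<le> cdf N y"
    by (rule eventually_at_rightI[of x "x + 1"]) auto
qed simp

lemma real_distribution_eqI_cts_step:
  assumes "real_distribution M" "real_distribution N"
    and "\<And>a b. a < b \<Longrightarrow> integral\<^sup>L M (cts_step a b) = integral\<^sup>L N (cts_step a b)"
  shows "M = N"
proof (rule cdf_unique[OF assms(1,2)])
  show "cdf M = cdf N"
    using cdf_le_of_cts_step_integral_le[OF assms(1,2)] cdf_le_of_cts_step_integral_le[OF assms(2,1)] assms(3)
    by (intro ext antisym) auto
qed

lemma distr_eq_of_weak_limits:
  fixes \<pi> :: "real \<times> real \<Rightarrow> real"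
  assumes M: "prob_space M" "prob_space M'" "sets M = sets (sqM K)" "sets M' = sets (sqM K)"
    and N: "\<And>n. sets (N n) = sets (sqM K)" "\<And>n. sets (N' n) = sets (sqM K)"
    and \<pi>: "\<pi> \<in> borel_measurable (sqM K)" "continuous_on (sq K) \<pi>"
    and eq: "\<And>n. distr (N n) borel \<pi> = distr (N' n) borel \<pi>"
    and lim: "\<And>f :: real \<times> real \<Rightarrow> real. continuous_on (sq K) f \<Longrightarrow> bounded (f ` sq K) \<Longrightarrow> (\<lambda>n. \<integral>t. f t \<partial>N n) \<longlonglongrightarrow> (\<integral>t. f t \<partial>M)"
    and lim': "\<And>f :: real \<times> real \<Rightarrow> real. continuous_on (sq K) f \<Longrightarrow> bounded (f ` sq K) \<Longrightarrow> (\<lambda>n. \<integral>t. f t \<partial>N' n) \<longlonglongrightarrow> (\<integral>t. f t \<partial>M')"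
  shows "distr M borel \<pi> = distr M' borel \<pi>"
proof (rule real_distribution_eqI_cts_step)
  have meas: "\<pi> \<in> borel_measurable L" if "sets L = sets (sqM K)" for L
    using \<pi>(1) measurable_cong_sets[OF that refl] by blast
  show "real_distribution (distr M borel \<pi>)" "real_distribution (distr M' borel \<pi>)"
    using prob_space.real_distribution_distr meas M by blast+
  fix a b :: real assume ab: "a < b"
  have step: "continuous_on UNIV (cts_step a b)"
    by (rule uniformly_continuous_imp_continuous[OF cts_step_uniformly_continuous[OF ab]])
  then have step_meas: "cts_step a b \<in> borel_measurable borel"
    by (rule borel_measurable_continuous_onI)
  have integral_distr_step: "integral\<^sup>L (distr L borel \<pi>) (cts_step a b) = (\<integral>t. cts_step a b (\<pi> t) \<partial>L)"
    if "sets L = sets (sqM K)" for L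
    by (rule integral_distr[OF meas[OF that] step_meas])
  have cont: "continuous_on (sq K) (\<lambda>t. cts_step a b (\<pi> t))"
    by (rule continuous_on_compose2[OF step \<pi>(2)]) auto
  have bdd: "bounded ((\<lambda>t. cts_step a b (\<pi> t)) ` sq K)"
    by (rule bounded_subset[OF bounded_closed_interval[of 0 1]]) (use ab in \<open>auto simp: cts_step_def field_simps\<close>)
  have "(\<integral>t. cts_step a b (\<pi> t) \<partial>N n) = (\<integral>t. cts_step a b (\<pi> t) \<partial>N' n)" for n
    by (simp only: integral_distr_step[OF N(1), symmetric] integral_distr_step[OF N(2), symmetric] eq)
  then have "(\<lambda>n. \<integral>t. cts_step a b (\<pi> t) \<partial>N' n) \<longlonglongrightarrow> (\<integral>t. cts_step a b (\<pi> t) \<partial>M)"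
    using lim[OF cont bdd] by simp
  from LIMSEQ_unique[OF this lim'[OF cont bdd]]
  show "integral\<^sup>L (distr M borel \<pi>) (cts_step a b) = integral\<^sup>L (distr M' borel \<pi>) (cts_step a b)"
    unfolding integral_distr_step[OF M(3)] integral_distr_step[OF M(4)] .
qed

lemma no_signaling_weak_limit:
  assumes beh: "is_behaviour K \<mu>" and ns: "\<And>n. no_signaling K (\<mu>s n)" and conv: "cw_weak_conv K \<mu>s \<mu>"
  shows "no_signaling K \<mu>"
proof -
  have M: "prob_space (\<mu> x y)" "sets (\<mu> x y) = sets (sqM K)" for x y
    using beh by (auto simp: is_behaviour_def)
  have beh_n: "is_behaviour K (\<mu>s n)" for n
    using ns by (simp add: no_signaling_def)
  have N: "sets (\<mu>s n x y) = sets (sqM K)" for n x y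
    using beh_n by (simp add: is_behaviour_def)
  have lim: "(\<lambda>n. \<integral>t. f t \<partial>\<mu>s n x y) \<longlonglongrightarrow> (\<integral>t. f t \<partial>\<mu> x y)"
    if "continuous_on (sq K) f" "bounded (f ` sq K)" for f :: "real \<times> real \<Rightarrow> real" and x y
    using conv that unfolding cw_weak_conv_def by blast
  have cont: "continuous_on (sq K) fst" "continuous_on (sq K) snd"
    by (simp_all add: continuous_on_fst continuous_on_snd continuous_on_id)
  have marg: "distr (\<mu>s n x False) borel fst = distr (\<mu>s n x True) borel fst"
    "distr (\<mu>s n False y) borel snd = distr (\<mu>s n True y) borel snd" for n x y
    using ns[of n] unfolding no_signaling_iff_marginals[OF beh_n] by blast+
  show ?thesis
    unfolding no_signaling_iff_marginals[OF beh]
  proof (intro conjI allI)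
    show "distr (\<mu> x False) borel fst = distr (\<mu> x True) borel fst" for x
      by (rule distr_eq_of_weak_limits[where N = "\<lambda>n. \<mu>s n x False" and N' = "\<lambda>n. \<mu>s n x True"])
        (auto intro: lim simp: M N marg fst_measurable_sqM cont)
    show "distr (\<mu> False y) borel snd = distr (\<mu> True y) borel snd" for y
      by (rule distr_eq_of_weak_limits[where N = "\<lambda>n. \<mu>s n False y" and N' = "\<lambda>n. \<mu>s n True y"])
        (auto intro: lim simp: M N marg snd_measurable_sqM cont)
  qed
qed

section \<open>No-signaling behaviours are weak limits of mixtures of PR boxes\<close>

lemma measure_cell_sums:
  assumes m: "m \<ge> 1" and M: "prob_space M" "sets M = sets (sqM K)"
  shows "(\<Sum>j<m. measure M (cell K m i j)) = measure M (strip K m i \<times> {-K..K})"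
    and "(\<Sum>i<m. measure M (cell K m i j)) = measure M ({-K..K} \<times> strip K m j)"
    and "(\<Sum>i<m. \<Sum>j<m. measure M (cell K m i j)) = 1"
proof -
  interpret prob_space M by (rule M(1))
  have cells: "cell K m i j \<in> sets M" for i j using cell_sets M(2) by auto
  have "measure M (\<Union>j<m. cell K m i j) = (\<Sum>j<m. measure M (cell K m i j))" for i
    using cells by (intro finite_measure_finite_Union) (auto simp: disjoint_family_on_def cell_def)
  moreover have "(\<Union>j<m. cell K m i j) = strip K m i \<times> {-K..K}" for i
    using cell_index_less[OF m] by (auto simp: cell_def strip_def sq_def)
  ultimately show row: "(\<Sum>j<m. measure M (cell K m i j)) = measure M (strip K m i \<times> {-K..K})" for i
    by simp
  have "measure M (\<Union>i<m. cell K m i j) = (\<Sum>i<m. measure M (cell K m i j))"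
    using cells by (intro finite_measure_finite_Union) (auto simp: disjoint_family_on_def cell_def)
  moreover have "(\<Union>i<m. cell K m i j) = {-K..K} \<times> strip K m j"
    using cell_index_less[OF m] by (auto simp: cell_def strip_def sq_def)
  ultimately show "(\<Sum>i<m. measure M (cell K m i j)) = measure M ({-K..K} \<times> strip K m j)"
    by simp
  have "strip K m i \<times> {-K..K} \<in> sets M" for i
    using M(2) rectangle_sets[OF strip_sets _ strip_subset order_refl] by auto
  then have "measure M (\<Union>i<m. strip K m i \<times> {-K..K}) = (\<Sum>i<m. measure M (strip K m i \<times> {-K..K}))"
    by (intro finite_measure_finite_Union) (auto simp: disjoint_family_on_def strip_def)
  moreover have "(\<Union>i<m. strip K m i \<times> {-K..K}) = space M"
    using cell_index_less[OF m] sets_eq_imp_space_eq[OF M(2)] by (auto simp: strip_def sq_def)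
  ultimately show "(\<Sum>i<m. \<Sum>j<m. measure M (cell K m i j)) = 1"
    using row prob_space by simp
qed

lemma discrete_no_signaling_cell_measures:
  assumes m: "m \<ge> 1" and ns: "no_signaling K \<mu>"
  shows "discrete_no_signaling m (\<lambda>x y i j. measure (\<mu> x y) (cell K m i j))"
proof -
  have M: "prob_space (\<mu> x y)" "sets (\<mu> x y) = sets (sqM K)" for x y
    using ns by (auto simp: no_signaling_def is_behaviour_def)
  show ?thesis
    unfolding discrete_no_signaling_def measure_cell_sums(1,2)[OF m M]
    using ns strip_sets strip_subset by (simp add: no_signaling_def)
qed

lemma exists_conv_PR_matching_cells:
  assumes K: "K > 0" and m: "m \<ge> 1" and ns: "no_signaling K \<mu>"
  obtains \<nu> where "in_conv_PR K \<nu>"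
    "\<And>x y i j. i < m \<Longrightarrow> j < m \<Longrightarrow> measure (\<nu> x y) (cell K m i j) = measure (\<mu> x y) (cell K m i j)"
proof -
  define p where "p x y i j = measure (\<mu> x y) (cell K m i j)" for x y i j
  have M: "prob_space (\<mu> x y)" "sets (\<mu> x y) = sets (sqM K)" for x y
    using ns by (auto simp: no_signaling_def is_behaviour_def)
  have "pr_decomposable m p"
    unfolding p_def by (intro discrete_no_signaling_decomposable discrete_no_signaling_cell_measures m ns)
  then obtain n :: nat and c k \<alpha> \<beta> where
    comp: "\<forall>l<n. c l \<ge> 0 \<and> pr_labels m (k l) (\<alpha> l) (\<beta> l)" and
    p: "\<And>x y i j. i < m \<Longrightarrow> j < m \<Longrightarrow> p x y i j = (\<Sum>l<n. c l * pr_table (k l) (\<alpha> l) (\<beta> l) x y i j)"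
    unfolding pr_decomposable_def by blast
  have "1 = (\<Sum>i<m. \<Sum>j<m. p False False i j)"
    unfolding p_def using measure_cell_sums(3)[OF m M] by simp
  also have "\<dots> = (\<Sum>l<n. c l * (\<Sum>i<m. \<Sum>j<m. pr_table (k l) (\<alpha> l) (\<beta> l) False False i j))"
    by (simp add: p sum_distrib_left sum.swap[of _ "{..<n}"])
  also have "\<dots> = (\<Sum>l<n. c l)"
    using comp by (simp add: pr_table_total)
  finally have sum1: "(\<Sum>l<n. c l) = 1" ..
  define a where "a l = grid_outcomes K m (k l) (\<alpha> l)" for l
  define b where "b l = grid_outcomes K m (k l) (\<beta> l)" for l
  have out: "\<forall>l<n. c l \<ge> 0 \<and> pr_outcomes K (k l) (a l) (b l)"
    using comp pr_outcomes_grid_outcomes[OF K] by (simp add: a_def b_def)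
  show ?thesis
  proof (rule that)
    show "in_conv_PR K (pr_mixture K n c k a b)"
      by (rule in_conv_PR_pr_mixture[OF out sum1])
    fix x y i j assume "i < m" "j < m"
    then show "measure (pr_mixture K n c k a b x y) (cell K m i j) = measure (\<mu> x y) (cell K m i j)"
      using comp by (simp add: measure_pr_mixture[OF out cell_sets] a_def b_def
          measure_cell_grid_pr_behaviour[OF K] p flip: p_def)
  qed
qed

definition cell_corner :: "real \<Rightarrow> nat \<Rightarrow> real \<times> real \<Rightarrow> real \<times> real" where
  "cell_corner K m z = (grid_point K m (cell_index K m (fst z)) 0, grid_point K m (cell_index K m (snd z)) 0)"

lemma cell_corner_in_sq:
  assumes "K > 0" "m \<ge> 1"
  shows "cell_corner K m z \<in> sq K"
  using grid_point_in_interval[OF assms(1) cell_index_less[OF assms(2)]]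
  by (simp add: cell_corner_def sq_def)

lemma dist_cell_corner:
  assumes "K > 0" "m \<ge> 1" "z \<in> sq K"
  shows "dist z (cell_corner K m z) \<le> 4 * K / m"
proof -
  obtain s t where z: "z = (s, t)" "s \<in> {-K..K}" "t \<in> {-K..K}"
    using assms(3) by (auto simp: sq_def)
  have "dist z (cell_corner K m z) \<le> dist s (grid_point K m (cell_index K m s) 0) +
      dist t (grid_point K m (cell_index K m t) 0)"
    unfolding z(1) cell_corner_def dist_Pair_Pair fst_conv snd_conv
    by (rule sqrt_sum_squares_le_sum) auto
  also have "\<dots> \<le> 2*K/m + 2*K/m"
    using dist_grid_point_cell_index[OF assms(1,2)] z by (intro add_mono) auto
  finally show ?thesis by simp
qed

lemma sum_cell_indicator:
  assumes "m \<ge> 1" "z \<in> sq K"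
  shows "(\<Sum>i<m. \<Sum>j<m. F i j * indicator (cell K m i j) z) = (F (cell_index K m (fst z)) (cell_index K m (snd z)) :: real)"
proof -
  have "(\<Sum>i<m. \<Sum>j<m. F i j * indicator (cell K m i j) z) =
      (\<Sum>i<m. \<Sum>j<m. if i = cell_index K m (fst z) \<and> j = cell_index K m (snd z) then F i j else 0)"
    using assms(2) by (intro sum.cong refl) (auto simp: cell_def indicator_def)
  also have "\<dots> = (\<Sum>i<m. if i = cell_index K m (fst z) then F i (cell_index K m (snd z)) else 0)"
    using cell_index_less[OF assms(1)] by (intro sum.cong refl) (auto simp: sum.delta')
  also have "\<dots> = F (cell_index K m (fst z)) (cell_index K m (snd z))"
    using cell_index_less[OF assms(1)] by (simp add: sum.delta')
  finally show ?thesis .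
qed

lemma
  assumes "finite_measure M" "sets M = sets (sqM K)"
  shows integrable_sum_cell_indicator: "integrable M (\<lambda>z. \<Sum>i<m. \<Sum>j<m. F i j * indicator (cell K m i j) z :: real)"
    and integral_sum_cell_indicator: "(\<integral>z. (\<Sum>i<m. \<Sum>j<m. F i j * indicator (cell K m i j) z) \<partial>M) =
      (\<Sum>i<m. \<Sum>j<m. F i j * measure M (cell K m i j))"
proof -
  have cells: "cell K m i j \<in> sets M" for i j using cell_sets assms(2) by simp
  have cell_int: "integrable M (\<lambda>z. F i j * indicator (cell K m i j) z :: real)" for i j
    using cells finite_measure.emeasure_finite[OF assms(1)]
    by (intro integrable_mult_right integrable_real_indicator) (auto simp: top.not_eq_extremum)
  then show "integrable M (\<lambda>z. \<Sum>i<m. \<Sum>j<m. F i j * indicator (cell K m i j) z :: real)"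
    by (intro Bochner_Integration.integrable_sum)
  have "(\<integral>z. (\<Sum>i<m. \<Sum>j<m. F i j * indicator (cell K m i j) z) \<partial>M) =
      (\<Sum>i<m. \<Sum>j<m. \<integral>z. F i j * indicator (cell K m i j) z \<partial>M)"
    by (subst Bochner_Integration.integral_sum, rule Bochner_Integration.integrable_sum, rule cell_int)
       (intro sum.cong refl Bochner_Integration.integral_sum cell_int)
  also have "\<dots> = (\<Sum>i<m. \<Sum>j<m. F i j * measure M (cell K m i j))"
  proof (intro sum.cong refl)
    fix i j
    have "cell K m i j \<inter> space M = cell K m i j" using sets.sets_into_space[OF cells] by blast
    then show "(\<integral>z. F i j * indicator (cell K m i j) z \<partial>M) = F i j * measure M (cell K m i j)"
      by simp
  qed
  finally show "(\<integral>z. (\<Sum>i<m. \<Sum>j<m. F i j * indicator (cell K m i j) z) \<partial>M) =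
      (\<Sum>i<m. \<Sum>j<m. F i j * measure M (cell K m i j))" .
qed

lemma compact_sq: "compact (sq K)"
  unfolding sq_def by (intro compact_Times compact_Icc)

lemma integrable_continuous_sqM:
  assumes "finite_measure M" "sets M = sets (sqM K)" "continuous_on (sq K) f"
  shows "integrable M (f :: real \<times> real \<Rightarrow> real)"
proof -
  have "f \<in> borel_measurable (sqM K)"
    unfolding sqM_def by (rule borel_measurable_continuous_on_restrict[OF assms(3)])
  then have "f \<in> borel_measurable M"
    using measurable_cong_sets[OF assms(2) refl] by blast
  moreover obtain B where "\<And>z. z \<in> sq K \<Longrightarrow> norm (f z) \<le> B"
    using compact_imp_bounded[OF compact_continuous_image[OF assms(3) compact_sq]]
    by (auto simp: bounded_iff)
  ultimately show ?thesis
    using assms(1) sets_eq_imp_space_eq[OF assms(2)]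
    by (intro finite_measure.integrable_const_bound[where B = B]) auto
qed

lemma integral_cell_approx:
  fixes f :: "real \<times> real \<Rightarrow> real"
  assumes m: "m \<ge> 1" and M: "prob_space M" "sets M = sets (sqM K)" and f: "continuous_on (sq K) f"
    and osc: "\<And>z. z \<in> sq K \<Longrightarrow> \<bar>f z - f (cell_corner K m z)\<bar> \<le> e"
  shows "\<bar>(\<integral>z. f z \<partial>M) - (\<Sum>i<m. \<Sum>j<m. f (grid_point K m i 0, grid_point K m j 0) * measure M (cell K m i j))\<bar> \<le> e"
proof -
  interpret prob_space M by (rule M(1))
  define g where "g z = (\<Sum>i<m. \<Sum>j<m. f (grid_point K m i 0, grid_point K m j 0) * indicator (cell K m i j) z)" for z
  have space: "space M = sq K" using sets_eq_imp_space_eq[OF M(2)] by simp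
  have f_int: "integrable M f"
    by (rule integrable_continuous_sqM[OF finite_measure_axioms M(2) f])
  have g_int: "integrable M g"
    unfolding g_def by (rule integrable_sum_cell_indicator[OF finite_measure_axioms M(2)])
  have "g z = f (cell_corner K m z)" if "z \<in> sq K" for z
    unfolding g_def cell_corner_def using sum_cell_indicator[OF m that] by simp
  then have "\<bar>\<integral>z. f z - g z \<partial>M\<bar> \<le> (\<integral>z. e \<partial>M)"
    using f_int g_int osc by (intro integral_abs_bound_integral) (auto simp: space)
  moreover have "(\<integral>z. f z - g z \<partial>M) = (\<integral>z. f z \<partial>M) - (\<integral>z. g z \<partial>M)"
    by (rule Bochner_Integration.integral_diff[OF f_int g_int])
  moreover have "(\<integral>z. g z \<partial>M) = (\<Sum>i<m. \<Sum>j<m. f (grid_point K m i 0, grid_point K m j 0) * measure M (cell K m i j))"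
    unfolding g_def by (rule integral_sum_cell_indicator[OF finite_measure_axioms M(2)])
  ultimately show ?thesis using prob_space by simp
qed

lemma integrals_close_of_matching_cells:
  fixes f :: "real \<times> real \<Rightarrow> real"
  assumes m: "m \<ge> 1" and M: "prob_space M" "sets M = sets (sqM K)" and N: "prob_space N" "sets N = sets (sqM K)"
    and cells: "\<And>i j. i < m \<Longrightarrow> j < m \<Longrightarrow> measure M (cell K m i j) = measure N (cell K m i j)"
    and f: "continuous_on (sq K) f"
    and osc: "\<And>z. z \<in> sq K \<Longrightarrow> \<bar>f z - f (cell_corner K m z)\<bar> \<le> e"
  shows "\<bar>(\<integral>z. f z \<partial>M) - (\<integral>z. f z \<partial>N)\<bar> \<le> 2 * e"
proof -
  let ?S = "\<lambda>L :: (real \<times> real) measure.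
    \<Sum>i<m. \<Sum>j<m. f (grid_point K m i 0, grid_point K m j 0) * measure L (cell K m i j)"
  have "?S M = ?S N"
    using cells by (intro sum.cong refl) auto
  then show ?thesis
    using integral_cell_approx[OF m M f osc] integral_cell_approx[OF m N f osc]
    unfolding abs_le_iff by linarith
qed

lemma cw_weak_conv_of_matching_cells:
  assumes K: "K > 0" and beh: "is_behaviour K \<mu>" "\<And>n. is_behaviour K (\<mu>s n)"
    and cells: "\<And>n x y i j. i \<le> n \<Longrightarrow> j \<le> n \<Longrightarrow>
      measure (\<mu>s n x y) (cell K (Suc n) i j) = measure (\<mu> x y) (cell K (Suc n) i j)"
  shows "cw_weak_conv K \<mu>s \<mu>"
  unfolding cw_weak_conv_def
proof (intro allI impI)
  fix x y and f :: "real \<times> real \<Rightarrow> real"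
  assume "continuous_on (sq K) f \<and> bounded (f ` sq K)"
  then have f: "continuous_on (sq K) f" by simp
  have M: "prob_space (\<mu> x y)" "sets (\<mu> x y) = sets (sqM K)"
    and N: "prob_space (\<mu>s n x y)" "sets (\<mu>s n x y) = sets (sqM K)" for n
    using beh by (auto simp: is_behaviour_def)
  show "(\<lambda>n. \<integral>t. f t \<partial>\<mu>s n x y) \<longlonglongrightarrow> (\<integral>t. f t \<partial>\<mu> x y)"
  proof (rule LIMSEQ_I)
    fix r :: real assume r: "r > 0"
    then obtain d where d: "d > 0"
      and unif: "\<And>z z'. z \<in> sq K \<Longrightarrow> z' \<in> sq K \<Longrightarrow> dist z' z < d \<Longrightarrow> dist (f z') (f z) < r / 3"
      using compact_uniformly_continuous[OF f compact_sq] unfolding uniformly_continuous_on_def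
      by (metis divide_pos_pos zero_less_numeral)
    obtain n0 :: nat where n0: "4 * K / d < n0" using reals_Archimedean2 by blast
    show "\<exists>N. \<forall>n\<ge>N. norm ((\<integral>t. f t \<partial>\<mu>s n x y) - (\<integral>t. f t \<partial>\<mu> x y)) < r"
    proof (intro exI allI impI)
      fix n assume "n0 \<le> n"
      then have "4 * K / d < Suc n" using n0 by linarith
      then have mesh: "4 * K / Suc n < d" using d by (simp add: field_simps)
      have "\<bar>f z - f (cell_corner K (Suc n) z)\<bar> \<le> r / 3" if "z \<in> sq K" for z
      proof -
        have "dist z (cell_corner K (Suc n) z) < d"
          using dist_cell_corner[OF K _ that, of "Suc n"] mesh by simp
        moreover have "cell_corner K (Suc n) z \<in> sq K" by (rule cell_corner_in_sq[OF K]) simp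
        ultimately have "dist (f z) (f (cell_corner K (Suc n) z)) < r / 3"
          using unif that by blast
        then show ?thesis by (simp add: dist_real_def)
      qed
      then have "\<bar>(\<integral>t. f t \<partial>\<mu>s n x y) - (\<integral>t. f t \<partial>\<mu> x y)\<bar> \<le> 2 * (r / 3)"
        using cells by (intro integrals_close_of_matching_cells[where m = "Suc n", OF _ N M _ f]) auto
      then show "norm ((\<integral>t. f t \<partial>\<mu>s n x y) - (\<integral>t. f t \<partial>\<mu> x y)) < r"
        using r by simp
    qed
  qed
qed

lemma no_signaling_imp_approximable:
  assumes K: "K > 0" and ns: "no_signaling K \<mu>"
  obtains \<mu>s where "\<And>n. in_conv_PR K (\<mu>s n)" "cw_weak_conv K \<mu>s \<mu>"
proof -
  have "\<exists>\<nu>. in_conv_PR K \<nu> \<and> (\<forall>x y i j. i \<le> n \<longrightarrow> j \<le> n \<longrightarrow>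
      measure (\<nu> x y) (cell K (Suc n) i j) = measure (\<mu> x y) (cell K (Suc n) i j))" for n
  proof -
    obtain \<nu> where "in_conv_PR K \<nu>" "\<And>x y i j. i < Suc n \<Longrightarrow> j < Suc n \<Longrightarrow>
        measure (\<nu> x y) (cell K (Suc n) i j) = measure (\<mu> x y) (cell K (Suc n) i j)"
      using exists_conv_PR_matching_cells[OF K _ ns, of "Suc n"] by auto
    then show ?thesis by (auto simp: less_Suc_eq_le)
  qed
  then obtain \<mu>s where conv: "\<And>n. in_conv_PR K (\<mu>s n)"
    and cells: "\<And>n x y i j. i \<le> n \<Longrightarrow> j \<le> n \<Longrightarrow>
      measure (\<mu>s n x y) (cell K (Suc n) i j) = measure (\<mu> x y) (cell K (Suc n) i j)"
    by metis
  have "cw_weak_conv K \<mu>s \<mu>"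
    using ns conv cells
    by (intro cw_weak_conv_of_matching_cells[OF K]) (auto simp: no_signaling_def in_conv_PR_def)
  with conv that show ?thesis by blast
qed

theorem lemma1:
  fixes K :: real
  assumes "K > 0"
  shows "{\<mu>. is_behaviour K \<mu> \<and>
             (\<exists>\<mu>s. (\<forall>n. in_conv_PR K (\<mu>s n)) \<and> cw_weak_conv K \<mu>s \<mu>)}
         = {\<mu>. no_signaling K \<mu>}"
proof (intro equalityI subsetI)
  fix \<mu> assume "\<mu> \<in> {\<mu>. is_behaviour K \<mu> \<and> (\<exists>\<mu>s. (\<forall>n. in_conv_PR K (\<mu>s n)) \<and> cw_weak_conv K \<mu>s \<mu>)}"
  then obtain \<mu>s where "is_behaviour K \<mu>" "\<And>n. in_conv_PR K (\<mu>s n)" "cw_weak_conv K \<mu>s \<mu>"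
    by blast
  then show "\<mu> \<in> {\<mu>. no_signaling K \<mu>}"
    using no_signaling_weak_limit in_conv_PR_no_signaling by blast
next
  fix \<mu> assume "\<mu> \<in> {\<mu>. no_signaling K \<mu>}"
  then have "no_signaling K \<mu>" by simp
  moreover obtain \<mu>s where "\<And>n. in_conv_PR K (\<mu>s n)" "cw_weak_conv K \<mu>s \<mu>"
    using no_signaling_imp_approximable[OF assms calculation] by blast
  ultimately show "\<mu> \<in> {\<mu>. is_behaviour K \<mu> \<and> (\<exists>\<mu>s. (\<forall>n. in_conv_PR K (\<mu>s n)) \<and> cw_weak_conv K \<mu>s \<mu>)}"
    by (auto simp: no_signaling_def)
qed

end
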